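(* Let $R$ be a unital associative algebra over an infinite field $F$, let $n\geq 3$ be an integer, and let $p\in F[x]$ be a nonconstant polynomial. Then every (upper or lower) triangular matrix in $\mathrm{M}_n(R)$ can be written as a product of two elements of $p[\mathrm{M}_n(R),\mathrm{M}_n(R)]=\{p(AB)-p(BA)\mid A,B\in\mathrm{M}_n(R)\}$. *)

theory Defs
  imports "Jordan_Normal_Form.Matrix" "HOL-Computational_Algebra.Polynomial"
begin

definition F_algebra :: "('f::field \<Rightarrow> 'r::ring_1 \<Rightarrow> 'r) \<Rightarrow> bool" where
  "F_algebra sm \<longleftrightarrow>
     (\<forall>a b x. sm (a + b) x = sm a x + sm b x) \<and>
     (\<forall>a x y. sm a (x + y) = sm a x + sm a y) \<and>
     (\<forall>a b x. sm (a * b) x = sm a (sm b x)) \<and>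
     (\<forall>x. sm 1 x = x) \<and>
     (\<forall>a x y. sm a (x * y) = sm a x * y \<and> sm a (x * y) = x * sm a y)"

definition poly_mat :: "('f::field \<Rightarrow> 'r::ring_1 \<Rightarrow> 'r) \<Rightarrow> 'f poly \<Rightarrow> 'r mat \<Rightarrow> 'r mat" where
  "poly_mat sm p M = mat (dim_row M) (dim_col M)
     (\<lambda>(i,j). \<Sum>k\<le>degree p. sm (coeff p k) ((M ^\<^sub>m k) $$ (i,j)))"

definition poly_commutators :: "('f::field \<Rightarrow> 'r::ring_1 \<Rightarrow> 'r) \<Rightarrow> 'f poly \<Rightarrow> nat \<Rightarrow> 'r mat set" where
  "poly_commutators sm p n =
     {poly_mat sm p (A * B) - poly_mat sm p (B * A) | A B.
        A \<in> carrier_mat n n \<and> B \<in> carrier_mat n n}"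

definition lower_triangular :: "'a::zero mat \<Rightarrow> bool" where
  "lower_triangular A \<longleftrightarrow> (\<forall>i < dim_row A. \<forall>j < dim_col A. i < j \<longrightarrow> A $$ (i,j) = 0)"

end

theory Submission
  imports Defs
begin

text \<open>
  A triangular matrix of size at least 3 is a product of two matrices with zero diagonal, so it
  suffices to put every zero-diagonal matrix X into p[M_n(R), M_n(R)]. As F is infinite and p is
  nonconstant, there are scalars \<lambda>_i with pairwise distinct values p(\<lambda>_i);
  put \<zeta>_i = p(\<lambda>_i) 1, which are central with invertible differences. Write X = L - U,
  where L is lower triangular with diagonal \<zeta> and the strictly lower part of X, and U is upper
  triangular with diagonal \<zeta> and minus the strictly upper part of X. Both L and U are then
  similar to diag(\<zeta>) = p(D) for D = diag(\<lambda>_i 1), so L = p(M_1) and U = p(M_2) with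
  M_1, M_2 similar to D. Finally, similar matrices M_1 = P M_2 Q have the form AB and BA
  (take A = P M_2 and B = Q).
\<close>

section \<open>Similarity\<close>

lemma index_mult_mat_sum:
  assumes "A \<in> carrier_mat n m" "B \<in> carrier_mat m k" "i < n" "j < k"
  shows "(A * B) $$ (i,j) = (\<Sum>l<m. A $$ (i,l) * B $$ (l,j))"
  using assms by (simp add: scalar_prod_def atLeast0LessThan)

lemma index_mult_mat_triple:
  fixes P M Q :: "'a::semiring_0 mat"
  assumes "P \<in> carrier_mat n n" "M \<in> carrier_mat n n" "Q \<in> carrier_mat n n" "i < n" "j < n"
  shows "(P * M * Q) $$ (i,j) = (\<Sum>a<n. \<Sum>b<n. P $$ (i,a) * M $$ (a,b) * Q $$ (b,j))"
proof -
  have "(P * M * Q) $$ (i,j) = (\<Sum>b<n. (P * M) $$ (i,b) * Q $$ (b,j))"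
    by (rule index_mult_mat_sum) (use assms in auto)
  also have "\<dots> = (\<Sum>b<n. (\<Sum>a<n. P $$ (i,a) * M $$ (a,b)) * Q $$ (b,j))"
    by (intro sum.cong refl) (simp add: index_mult_mat_sum[OF assms(1,2)] assms(4))
  also have "\<dots> = (\<Sum>a<n. \<Sum>b<n. P $$ (i,a) * M $$ (a,b) * Q $$ (b,j))"
    by (subst sum.swap) (simp add: sum_distrib_right)
  finally show ?thesis .
qed

lemma similar_mat_witI_intertwine:
  assumes "{A, B, P, Q} \<subseteq> carrier_mat n n" "P * Q = 1\<^sub>m n" "Q * P = 1\<^sub>m n" "A * P = P * B"
  shows "similar_mat_wit A B P Q"
proof (rule similar_mat_witI[OF assms(2,3)])
  have carrier: "A \<in> carrier_mat n n" "B \<in> carrier_mat n n" "P \<in> carrier_mat n n" "Q \<in> carrier_mat n n"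
    using assms(1) by auto
  then have "A = A * (P * Q)" using assms(2) by simp
  also have "\<dots> = P * B * Q" using carrier assms(4) by (simp flip: assoc_mult_mat)
  finally show "A = P * B * Q" .
qed (use assms(1) in auto)

lemma similar_mat_imp_swapped_products:
  assumes "similar_mat A B" "A \<in> carrier_mat n n"
  shows "\<exists>C D. C \<in> carrier_mat n n \<and> D \<in> carrier_mat n n \<and> A = C * D \<and> B = D * C"
proof -
  obtain P Q where "similar_mat_wit A B P Q" using assms(1) unfolding similar_mat_def by blast
  note wit = similar_mat_witD2[OF assms(2) this]
  have "B = (Q * P) * B" using wit by simp
  also have "\<dots> = Q * (P * B)" using wit by (intro assoc_mult_mat[of _ n n]) auto
  finally have "B = Q * (P * B)" .
  moreover have "A = (P * B) * Q" "P * B \<in> carrier_mat n n" "Q \<in> carrier_mat n n"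
    using wit by auto
  ultimately show ?thesis by blast
qed

text \<open>
  Conjugation by the exchange matrix. Unlike transposition it is multiplicative over a
  noncommutative ring, and it exchanges upper and lower triangular matrices.
\<close>
definition rev_mat :: "nat \<Rightarrow> 'a mat \<Rightarrow> 'a mat" where
  "rev_mat n A = mat n n (\<lambda>(i,j). A $$ (n - Suc i, n - Suc j))"

lemma rev_mat_carrier [simp]: "rev_mat n A \<in> carrier_mat n n"
  and rev_mat_dim [simp]: "dim_row (rev_mat n A) = n" "dim_col (rev_mat n A) = n"
  and index_rev_mat [simp]: "i < n \<Longrightarrow> j < n \<Longrightarrow> rev_mat n A $$ (i,j) = A $$ (n - Suc i, n - Suc j)"
  unfolding rev_mat_def by auto

lemma rev_mat_rev_mat [simp]: "A \<in> carrier_mat n n \<Longrightarrow> rev_mat n (rev_mat n A) = A"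
  by (rule eq_matI) (auto simp: Suc_diff_Suc)

lemma rev_mat_one [simp]: "rev_mat n (1\<^sub>m n) = 1\<^sub>m n"
  by (rule eq_matI) auto

lemma rev_mat_mult:
  fixes A B :: "'a::semiring_0 mat"
  assumes A: "A \<in> carrier_mat n n" and B: "B \<in> carrier_mat n n"
  shows "rev_mat n (A * B) = rev_mat n A * rev_mat n B"
proof (rule eq_matI)
  fix i j assume "i < dim_row (rev_mat n A * rev_mat n B)" "j < dim_col (rev_mat n A * rev_mat n B)"
  then have ij: "i < n" "j < n" by auto
  have "(rev_mat n A * rev_mat n B) $$ (i,j)
      = (\<Sum>l<n. A $$ (n - Suc i, n - Suc l) * B $$ (n - Suc l, n - Suc j))"
    using index_mult_mat_sum[OF rev_mat_carrier rev_mat_carrier ij] ij by simp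
  also have "\<dots> = (\<Sum>l<n. A $$ (n - Suc i, l) * B $$ (l, n - Suc j))"
    by (rule sum.nat_diff_reindex)
  also have "\<dots> = (A * B) $$ (n - Suc i, n - Suc j)"
    using index_mult_mat_sum[OF A B, of "n - Suc i" "n - Suc j"] ij by simp
  finally show "rev_mat n (A * B) $$ (i,j) = (rev_mat n A * rev_mat n B) $$ (i,j)"
    using ij by simp
qed auto

lemma similar_mat_rev_mat:
  assumes "similar_mat A B" "A \<in> carrier_mat n n"
  shows "similar_mat (rev_mat n A) (rev_mat n B)"
proof -
  obtain P Q where "similar_mat_wit A B P Q" using assms(1) unfolding similar_mat_def by blast
  from similar_mat_witD2[OF assms(2) this]
  have "P * Q = 1\<^sub>m n" "Q * P = 1\<^sub>m n" "A = P * B * Q"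
    and carrier: "B \<in> carrier_mat n n" "P \<in> carrier_mat n n" "Q \<in> carrier_mat n n" by auto
  then have "rev_mat n P * rev_mat n Q = 1\<^sub>m n" "rev_mat n Q * rev_mat n P = 1\<^sub>m n"
    "rev_mat n A = rev_mat n P * rev_mat n B * rev_mat n Q"
    by (simp_all flip: rev_mat_mult)
  then show ?thesis by (intro similar_matI[of _ _ _ _ n]) auto
qed

section \<open>Diagonalising triangular matrices\<close>

lemma bordered_diag_similar:
  fixes \<zeta> :: "nat \<Rightarrow> 'r::ring_1"
  assumes central: "\<And>i x. \<zeta> i * x = x * \<zeta> i"
    and inv: "\<And>j. j < n \<Longrightarrow> \<exists>d. (\<zeta> j - \<zeta> n) * d = 1"
    and s: "s \<in> carrier_mat 1 n"
  shows "similar_mat (four_block_mat (mat_diag n \<zeta>) (0\<^sub>m n 1) s (mat_diag 1 (\<lambda>_. \<zeta> n)))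
    (mat_diag (Suc n) \<zeta>)"
proof -
  obtain \<delta> where \<delta>: "\<And>j. j < n \<Longrightarrow> (\<zeta> j - \<zeta> n) * \<delta> j = 1" using inv by metis
  \<comment> \<open>W = [[1,0],[w,1]] conjugates the border row s away iff s + \<zeta>_n w = w diag(\<zeta>),
    which w_j = \<delta>_j s_j solves\<close>
  define w where "w = mat 1 n (\<lambda>(_, j). \<delta> j * s $$ (0, j))"
  define W where "W = four_block_mat (1\<^sub>m n) (0\<^sub>m n 1) w (1\<^sub>m 1)"
  define V where "V = four_block_mat (1\<^sub>m n) (0\<^sub>m n 1) (- w) (1\<^sub>m 1)"
  define c where "c = mat_diag 1 (\<lambda>_. \<zeta> n)"
  have w: "w \<in> carrier_mat 1 n" and c: "c \<in> carrier_mat 1 1" unfolding w_def c_def by auto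
  have diag_split: "mat_diag (Suc n) \<zeta> = four_block_mat (mat_diag n \<zeta>) (0\<^sub>m n 1) (0\<^sub>m 1 n) c"
    unfolding c_def by (rule eq_matI) (auto simp: mat_diag_def less_Suc_eq)
  have eigen: "s + c * w = w * mat_diag n \<zeta>"
  proof (rule eq_matI)
    fix i j assume "i < dim_row (w * mat_diag n \<zeta>)" "j < dim_col (w * mat_diag n \<zeta>)"
    then have ij: "i = 0" "j < n" using w by (auto simp: mat_diag_def)
    have "(\<zeta> j - \<zeta> n) * (\<delta> j * s $$ (0, j)) = s $$ (0, j)"
      using \<delta>[OF ij(2)] by (simp flip: mult.assoc)
    then have "s $$ (0, j) + \<zeta> n * (\<delta> j * s $$ (0, j)) = \<delta> j * s $$ (0, j) * \<zeta> j"
      by (simp add: algebra_simps central[of j])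
    moreover have "(c * w) $$ (0, j) = \<zeta> n * w $$ (0, j)"
      using w ij unfolding c_def by (subst mat_diag_mult_left[OF w]) auto
    moreover have "(w * mat_diag n \<zeta>) $$ (0, j) = w $$ (0, j) * \<zeta> j"
      using w ij by (subst mat_diag_mult_right[OF w]) auto
    ultimately show "(s + c * w) $$ (i, j) = (w * mat_diag n \<zeta>) $$ (i, j)"
      using ij s w c by (simp add: w_def)
  qed (use s w c in \<open>auto simp: mat_diag_def\<close>)
  have carrier: "W \<in> carrier_mat (Suc n) (Suc n)" "V \<in> carrier_mat (Suc n) (Suc n)"
    "four_block_mat (mat_diag n \<zeta>) (0\<^sub>m n 1) s c \<in> carrier_mat (Suc n) (Suc n)"
    unfolding W_def V_def c_def
    using four_block_carrier_mat[OF one_carrier_mat[of n] one_carrier_mat[of 1]]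
      four_block_carrier_mat[OF mat_diag_dim[of n \<zeta>] mat_diag_dim[of 1]] by simp_all
  have "W * V = 1\<^sub>m (n + 1)" "V * W = 1\<^sub>m (n + 1)"
    unfolding W_def V_def using w
    by (simp_all add: mult_four_block_mat[of _ n n _ 1 _ 1 _ _ n _ 1]) (rule eq_matI; auto)
  moreover have "four_block_mat (mat_diag n \<zeta>) (0\<^sub>m n 1) s c * W = W * mat_diag (Suc n) \<zeta>"
    unfolding W_def diag_split using s w c eigen
    by (simp add: mat_diag_def mult_four_block_mat[of _ n n _ 1 _ 1 _ _ n _ 1])
  ultimately have "similar_mat_wit (four_block_mat (mat_diag n \<zeta>) (0\<^sub>m n 1) s c)
      (mat_diag (Suc n) \<zeta>) W V"
    by (intro similar_mat_witI_intertwine) (use carrier in auto)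
  then show ?thesis unfolding similar_mat_def c_def by blast
qed

lemma lower_triangular_similar_diag:
  fixes \<zeta> :: "nat \<Rightarrow> 'r::ring_1"
  assumes central: "\<And>i x. \<zeta> i * x = x * \<zeta> i"
    and inv: "\<And>i j. i < n \<Longrightarrow> j < n \<Longrightarrow> i \<noteq> j \<Longrightarrow> \<exists>d. (\<zeta> i - \<zeta> j) * d = 1"
    and L: "L \<in> carrier_mat n n" "lower_triangular L" and diag: "\<And>i. i < n \<Longrightarrow> L $$ (i,i) = \<zeta> i"
  shows "similar_mat L (mat_diag n \<zeta>)"
  using inv L diag
proof (induction n arbitrary: L)
  case 0
  then have "L = mat_diag 0 \<zeta>" by (intro eq_matI) (auto simp: mat_diag_def)
  then show ?case by (simp add: similar_mat_refl[of _ 0])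
next
  case (Suc n)
  define L' where "L' = mat n n (\<lambda>(i,j). L $$ (i,j))"
  define r where "r = mat 1 n (\<lambda>(_,j). L $$ (n,j))"
  have r: "r \<in> carrier_mat 1 n" unfolding r_def by simp
  have "similar_mat L' (mat_diag n \<zeta>)"
    using Suc.prems by (intro Suc.IH) (auto simp: L'_def lower_triangular_def)
  then obtain P Q where wit: "similar_mat_wit L' (mat_diag n \<zeta>) P Q"
    unfolding similar_mat_def by blast
  have L': "L' \<in> carrier_mat n n" unfolding L'_def by simp
  note PQ = similar_mat_witD2[OF L' wit]
  define c where "c = mat_diag 1 (\<lambda>_. \<zeta> n)"
  have L_split: "L = four_block_mat L' (0\<^sub>m n 1) r c"
    using Suc.prems(2-4)
    by (intro eq_matI) (auto simp: L'_def r_def c_def mat_diag_def lower_triangular_def less_Suc_eq)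
  have "similar_mat L (four_block_mat (mat_diag n \<zeta>) (0\<^sub>m n 1) (r * P) c)"
    unfolding L_split similar_mat_def c_def
    by (rule exI, rule exI, rule similar_mat_wit_four_block[OF wit similar_mat_wit_refl[OF mat_diag_dim]])
      (use PQ r L' in auto)
  moreover have "similar_mat (four_block_mat (mat_diag n \<zeta>) (0\<^sub>m n 1) (r * P) c) (mat_diag (Suc n) \<zeta>)"
    unfolding c_def using Suc.prems(1) PQ r by (intro bordered_diag_similar central) auto
  ultimately show ?case by (rule similar_mat_trans)
qed

lemma upper_triangular_similar_diag:
  fixes \<zeta> :: "nat \<Rightarrow> 'r::ring_1"
  assumes central: "\<And>i x. \<zeta> i * x = x * \<zeta> i"
    and inv: "\<And>i j. i < n \<Longrightarrow> j < n \<Longrightarrow> i \<noteq> j \<Longrightarrow> \<exists>d. (\<zeta> i - \<zeta> j) * d = 1"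
    and U: "U \<in> carrier_mat n n" "upper_triangular U" and diag: "\<And>i. i < n \<Longrightarrow> U $$ (i,i) = \<zeta> i"
  shows "similar_mat U (mat_diag n \<zeta>)"
proof -
  let ?\<zeta> = "\<lambda>i. \<zeta> (n - Suc i)"
  have "similar_mat (rev_mat n U) (mat_diag n ?\<zeta>)"
    using U diag inv by (intro lower_triangular_similar_diag central) (auto simp: lower_triangular_def)
  then have "similar_mat (rev_mat n (rev_mat n U)) (rev_mat n (mat_diag n ?\<zeta>))"
    by (rule similar_mat_rev_mat) simp
  moreover have "rev_mat n (mat_diag n ?\<zeta>) = mat_diag n \<zeta>"
    by (rule eq_matI) (auto simp: mat_diag_def Suc_diff_Suc)
  ultimately show ?thesis using U by simp
qed

section \<open>Triangular matrices as products of zero-diagonal matrices\<close>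

lemma upper_triangular_zero_diag_factor:
  fixes T :: "'a::semiring_1 mat"
  assumes n: "3 \<le> n" and T: "T \<in> carrier_mat n n" "upper_triangular T"
  shows "\<exists>X Y. X \<in> carrier_mat n n \<and> Y \<in> carrier_mat n n \<and>
    (\<forall>i<n. X $$ (i,i) = 0) \<and> (\<forall>i<n. Y $$ (i,i) = 0) \<and> T = X * Y"
proof -
  \<comment> \<open>X has columns: column n-1 of T with its top entry replaced by 0, then e_0, then columns
    0, ..., n-3 of T. Y moves column k+1 of X to column k for 0 < k < n-1, and column 0 resp. n-1
    of X Y is e_0 T_00 resp. (column 0 of X) + e_0 T_0(n-1). Since n >= 3 the diagonal of Y is 0.\<close>
  define X where "X = mat n n (\<lambda>(i,k).
    if k = 0 then (if i = 0 then 0 else T $$ (i, n - 1))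
    else if k = 1 then (if i = 0 then 1 else 0)
    else T $$ (i, k - 1))"
  define Y where "Y = mat n n (\<lambda>(k,j).
    if j = 0 then (if k = 1 then T $$ (0,0) else 0)
    else if j = n - 1 then (if k = 0 then 1 else if k = 1 then T $$ (0, n - 1) else 0)
    else (if k = j + 1 then 1 else 0))"
  have X: "X \<in> carrier_mat n n" and Y: "Y \<in> carrier_mat n n" unfolding X_def Y_def by auto
  have T0: "T $$ (i,j) = 0" if "j < i" "i < n" for i j using T that by auto
  have "\<forall>i<n. X $$ (i,i) = 0" using T0[of "i - 1" i for i] by (auto simp: X_def)
  moreover have "\<forall>i<n. Y $$ (i,i) = 0" using n by (auto simp: Y_def)
  moreover have "X * Y = T"
  proof (rule eq_matI)
    fix i j assume "i < dim_row T" "j < dim_col T"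
    then have ij: "i < n" "j < n" using T by auto
    have "(X * Y) $$ (i,j) = (\<Sum>k<n. X $$ (i,k) * Y $$ (k,j))"
      by (rule index_mult_mat_sum[OF X Y ij])
    also have "\<dots> = T $$ (i,j)"
    proof -
      consider "j = 0" | "j = n - 1" | "0 < j" "j < n - 1" using ij by linarith
      then show ?thesis
      proof cases
        case 1
        then have "(\<Sum>k<n. X $$ (i,k) * Y $$ (k,j))
            = (\<Sum>k<n. if k = 1 then X $$ (i,1) * T $$ (0,0) else 0)"
          by (intro sum.cong) (auto simp: Y_def)
        also have "\<dots> = T $$ (i,j)" using 1 n ij T0[of 0 i] by (auto simp: X_def)
        finally show ?thesis .
      next
        case 2
        then have "(\<Sum>k<n. X $$ (i,k) * Y $$ (k,j))
            = (\<Sum>k<n. (if k = 0 then X $$ (i,0) else 0)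
                + (if k = 1 then X $$ (i,1) * T $$ (0, n - 1) else 0))"
          using n by (intro sum.cong) (auto simp: Y_def)
        also have "\<dots> = T $$ (i,j)" using 2 n ij by (auto simp: X_def sum.distrib)
        finally show ?thesis .
      next
        case 3
        then have "(\<Sum>k<n. X $$ (i,k) * Y $$ (k,j))
            = (\<Sum>k<n. if k = j + 1 then X $$ (i, j + 1) else 0)"
          by (intro sum.cong) (auto simp: Y_def)
        also have "\<dots> = T $$ (i,j)" using 3 ij by (auto simp: X_def)
        finally show ?thesis .
      qed
    qed
    finally show "(X * Y) $$ (i,j) = T $$ (i,j)" .
  qed (use T X Y in auto)
  ultimately show ?thesis using X Y by metis
qed

lemma lower_triangular_zero_diag_factor:
  fixes T :: "'a::semiring_1 mat"
  assumes n: "3 \<le> n" and T: "T \<in> carrier_mat n n" "lower_triangular T"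
  shows "\<exists>X Y. X \<in> carrier_mat n n \<and> Y \<in> carrier_mat n n \<and>
    (\<forall>i<n. X $$ (i,i) = 0) \<and> (\<forall>i<n. Y $$ (i,i) = 0) \<and> T = X * Y"
proof -
  have "upper_triangular (rev_mat n T)"
    using T unfolding lower_triangular_def by auto
  then obtain X Y where XY: "X \<in> carrier_mat n n" "Y \<in> carrier_mat n n"
    "\<forall>i<n. X $$ (i,i) = 0" "\<forall>i<n. Y $$ (i,i) = 0" "rev_mat n T = X * Y"
    using upper_triangular_zero_diag_factor[OF n rev_mat_carrier] by blast
  then have "T = rev_mat n X * rev_mat n Y"
    using T rev_mat_rev_mat[of T n] by (simp flip: rev_mat_mult)
  then show ?thesis using XY by (intro exI[of _ "rev_mat n X"] exI[of _ "rev_mat n Y"]) auto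
qed

section \<open>Polynomials of matrices over an F-algebra\<close>

lemma pow_mat_diag: "mat_diag n f ^\<^sub>m k = mat_diag n (\<lambda>i. f i ^ k)"
  by (induction k) (simp_all add: carrier_matD[OF mat_diag_dim] power_commutes)

lemma infinite_range_poly:
  fixes p :: "'f::field poly"
  assumes "infinite (UNIV :: 'f set)" "degree p \<ge> 1"
  shows "infinite (range (poly p))"
proof
  assume fin: "finite (range (poly p))"
  have "finite {x. poly p x = c}" for c
  proof -
    have "p - [:c:] \<noteq> 0" using assms(2) by (auto simp flip: eq_iff_diff_eq_0)
    then show ?thesis using poly_roots_finite[of "p - [:c:]"] by simp
  qed
  then have "finite (\<Union>c\<in>range (poly p). {x. poly p x = c})" using fin by blast
  moreover have "(\<Union>c\<in>range (poly p). {x. poly p x = c}) = UNIV" by auto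
  ultimately show False using assms(1) by simp
qed

lemma dim_poly_mat [simp]:
  "dim_row (poly_mat sm p M) = dim_row M" "dim_col (poly_mat sm p M) = dim_col M"
  by (simp_all add: poly_mat_def)

context
  fixes sm :: "'f::field \<Rightarrow> 'r::ring_1 \<Rightarrow> 'r"
  assumes FA: "F_algebra sm"
begin

lemma sm_add_left: "sm (a + b) x = sm a x + sm b x"
  and sm_add_right: "sm a (x + y) = sm a x + sm a y"
  and sm_sm: "sm (a * b) x = sm a (sm b x)"
  and sm_one: "sm 1 x = x"
  and sm_mult_left: "sm a (x * y) = sm a x * y"
  and sm_mult_right: "sm a (x * y) = x * sm a y"
  using FA unfolding F_algebra_def by blast+

lemma sm_zero_left: "sm 0 x = 0"
  using sm_add_left[of 0 0 x] by simp

lemma sm_zero_right: "sm a 0 = 0"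
  using sm_add_right[of a 0 0] by simp

lemma sm_diff_left: "sm (a - b) x = sm a x - sm b x"
  using sm_add_left[of "a - b" b x] by (simp add: algebra_simps)

lemma sm_sum_left: "sm (sum c A) x = (\<Sum>i\<in>A. sm (c i) x)"
  by (induction A rule: infinite_finite_induct) (auto simp: sm_zero_left sm_add_left)

lemma sm_sum_right: "sm a (sum g A) = (\<Sum>i\<in>A. sm a (g i))"
  by (induction A rule: infinite_finite_induct) (auto simp: sm_zero_right sm_add_right)

lemma sm_one_mult: "sm a 1 * x = sm a x"
  using sm_mult_left[of a 1 x] by simp

lemma mult_sm_one: "x * sm a 1 = sm a x"
  using sm_mult_right[of a x 1] by simp

lemma sm_one_power: "sm a 1 ^ k = sm (a ^ k) 1"
  by (induction k) (auto simp: sm_one sm_one_mult sm_sm)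

lemma sm_sandwich: "sm a (x * y * z) = x * sm a y * z"
  using sm_mult_left[of a "x * y" z] sm_mult_right[of a x y] by simp

lemma poly_mat_similar:
  assumes "similar_mat_wit A B P Q"
  shows "poly_mat sm p A = P * poly_mat sm p B * Q"
proof -
  define n where "n = dim_row A"
  note wit = similar_mat_witD[OF n_def assms]
  have pB: "poly_mat sm p B \<in> carrier_mat n n" using wit by (simp add: poly_mat_def)
  show ?thesis
  proof (rule eq_matI)
    fix i j assume "i < dim_row (P * poly_mat sm p B * Q)" "j < dim_col (P * poly_mat sm p B * Q)"
    then have ij: "i < n" "j < n" using wit by auto
    have "poly_mat sm p A $$ (i,j) = (\<Sum>k\<le>degree p. sm (coeff p k) ((P * B ^\<^sub>m k * Q) $$ (i,j)))"
      using wit ij similar_mat_wit_pow_id[OF assms] by (simp add: poly_mat_def)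
    also have "\<dots> = (\<Sum>k\<le>degree p. \<Sum>a<n. \<Sum>b<n. P $$ (i,a) * sm (coeff p k) ((B ^\<^sub>m k) $$ (a,b)) * Q $$ (b,j))"
    proof -
      have "(P * B ^\<^sub>m k * Q) $$ (i,j) = (\<Sum>a<n. \<Sum>b<n. P $$ (i,a) * (B ^\<^sub>m k) $$ (a,b) * Q $$ (b,j))"
        for k using wit ij by (intro index_mult_mat_triple) auto
      then show ?thesis by (simp only: sm_sum_right sm_sandwich)
    qed
    also have "\<dots> = (\<Sum>a<n. \<Sum>b<n. P $$ (i,a) * poly_mat sm p B $$ (a,b) * Q $$ (b,j))"
      using wit by (simp add: poly_mat_def sum_distrib_left sum_distrib_right sum.swap[of _ "{..degree p}"])
    also have "\<dots> = (P * poly_mat sm p B * Q) $$ (i,j)"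
      by (rule index_mult_mat_triple[symmetric]) (use wit pB ij in auto)
    finally show "poly_mat sm p A $$ (i,j) = (P * poly_mat sm p B * Q) $$ (i,j)" .
  qed (use wit in \<open>auto simp: poly_mat_def\<close>)
qed

lemma poly_mat_scalar_diag:
  "poly_mat sm p (mat_diag n (\<lambda>i. sm (x i) 1)) = mat_diag n (\<lambda>i. sm (poly p (x i)) 1)"
proof (rule eq_matI)
  fix i j assume "i < dim_row (mat_diag n (\<lambda>i. sm (poly p (x i)) 1))"
    "j < dim_col (mat_diag n (\<lambda>i. sm (poly p (x i)) 1))"
  then have ij: "i < n" "j < n" by (simp_all add: mat_diag_def)
  show "poly_mat sm p (mat_diag n (\<lambda>i. sm (x i) 1)) $$ (i,j) = mat_diag n (\<lambda>i. sm (poly p (x i)) 1) $$ (i,j)"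
  proof (cases "i = j")
    case True
    have "poly_mat sm p (mat_diag n (\<lambda>i. sm (x i) 1)) $$ (i,i) = (\<Sum>k\<le>degree p. sm (coeff p k) (sm (x i) 1 ^ k))"
      using ij unfolding poly_mat_def pow_mat_diag by (simp add: mat_diag_def)
    also have "\<dots> = (\<Sum>k\<le>degree p. sm (coeff p k * x i ^ k) 1)"
      by (simp add: sm_one_power sm_sm)
    also have "\<dots> = sm (poly p (x i)) 1"
      by (simp add: poly_altdef sm_sum_left)
    finally show ?thesis using True ij by (simp add: mat_diag_def)
  next
    case False
    then show ?thesis
      using ij unfolding poly_mat_def pow_mat_diag by (simp add: mat_diag_def sm_zero_right)
  qed
qed (simp_all add: poly_mat_def mat_diag_def)

lemma similar_poly_mat_lift:
  assumes "similar_mat L (poly_mat sm p D)" and D: "D \<in> carrier_mat n n"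
  shows "\<exists>M. M \<in> carrier_mat n n \<and> similar_mat M D \<and> poly_mat sm p M = L"
proof -
  obtain P Q where wit: "similar_mat_wit L (poly_mat sm p D) P Q"
    using assms(1) unfolding similar_mat_def by blast
  have "L \<in> carrier_mat n n"
    using similar_mat_witD(4,5)[OF refl wit] D by (metis carrier_matD(1) dim_poly_mat(1))
  note PQ = similar_mat_witD2[OF this wit]
  have PDQ: "P * D * Q \<in> carrier_mat n n" using PQ D by auto
  have "similar_mat_wit (P * D * Q) D P Q"
    by (rule similar_mat_witI[OF PQ(1,2) refl PDQ D PQ(6,7)])
  moreover from this have "poly_mat sm p (P * D * Q) = L"
    using PQ(3) by (simp only: poly_mat_similar)
  ultimately show ?thesis using PDQ unfolding similar_mat_def by blast
qed

lemma zero_diag_mem_poly_commutators: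
  assumes inf: "infinite (UNIV :: 'f set)" and deg: "degree p \<ge> 1"
    and X: "X \<in> carrier_mat n n" and diag: "\<forall>i<n. X $$ (i,i) = 0"
  shows "X \<in> poly_commutators sm p n"
proof -
  obtain f :: "nat \<Rightarrow> 'f" where f: "inj f" "range f \<subseteq> range (poly p)"
    using infinite_countable_subset[OF infinite_range_poly[OF inf deg]] by blast
  have "\<forall>i. \<exists>y. poly p y = f i" using f(2) by (metis range_subsetD rangeE)
  then obtain x where px: "\<And>i. poly p (x i) = f i" by metis
  define \<zeta> where "\<zeta> i = sm (f i) 1" for i
  have central: "\<zeta> i * y = y * \<zeta> i" for i y
    unfolding \<zeta>_def by (simp add: sm_one_mult mult_sm_one)
  have inv: "\<exists>d. (\<zeta> i - \<zeta> j) * d = 1" if "i \<noteq> j" for i j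
  proof
    have "f i - f j \<noteq> 0" using inj_eq[OF f(1)] that by simp
    then show "(\<zeta> i - \<zeta> j) * sm (inverse (f i - f j)) 1 = 1"
      by (simp add: \<zeta>_def sm_one_mult sm_one flip: sm_diff_left sm_sm)
  qed
  define L where "L = mat n n (\<lambda>(i,j). if i = j then \<zeta> i else if j < i then X $$ (i,j) else 0)"
  define U where "U = mat n n (\<lambda>(i,j). if i = j then \<zeta> i else if i < j then - X $$ (i,j) else 0)"
  define D where "D = mat_diag n (\<lambda>i. sm (x i) 1)"
  have D: "D \<in> carrier_mat n n" unfolding D_def by simp
  have pD: "poly_mat sm p D = mat_diag n \<zeta>"
    unfolding D_def poly_mat_scalar_diag px \<zeta>_def ..
  have "similar_mat L (poly_mat sm p D)"
    unfolding pD using inv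
    by (intro lower_triangular_similar_diag central) (auto simp: L_def lower_triangular_def)
  then obtain M1 where M1: "M1 \<in> carrier_mat n n" "similar_mat M1 D" "poly_mat sm p M1 = L"
    using similar_poly_mat_lift[OF _ D] by blast
  have "similar_mat U (poly_mat sm p D)"
    unfolding pD using inv
    by (intro upper_triangular_similar_diag central) (auto simp: U_def upper_triangular_def)
  then obtain M2 where M2: "similar_mat M2 D" "poly_mat sm p M2 = U"
    using similar_poly_mat_lift[OF _ D] by blast
  have "similar_mat M1 M2" using M1(2) M2(1) similar_mat_sym similar_mat_trans by blast
  then obtain A B where AB: "A \<in> carrier_mat n n" "B \<in> carrier_mat n n" "M1 = A * B" "M2 = B * A"
    using similar_mat_imp_swapped_products[OF _ M1(1)] by blast
  have "X = L - U"
    using X diag by (intro eq_matI) (auto simp: L_def U_def)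
  then show ?thesis
    unfolding poly_commutators_def using AB M1(3) M2(2) by blast
qed

end

theorem theorem4p1:
  fixes sm :: "'f::field \<Rightarrow> 'r::ring_1 \<Rightarrow> 'r"
    and p :: "'f poly" and n :: nat and T :: "'r mat"
  assumes "F_algebra sm"
    and "infinite (UNIV :: 'f set)"
    and "n \<ge> 3"
    and "degree p \<ge> 1"
    and "T \<in> carrier_mat n n"
    and "upper_triangular T \<or> lower_triangular T"
  shows "\<exists>X Y. X \<in> poly_commutators sm p n \<and> Y \<in> poly_commutators sm p n \<and> T = X * Y"
proof -
  obtain X Y where "X \<in> carrier_mat n n" "Y \<in> carrier_mat n n"
    "\<forall>i<n. X $$ (i,i) = 0" "\<forall>i<n. Y $$ (i,i) = 0" "T = X * Y"
    using assms(6) upper_triangular_zero_diag_factor[OF assms(3,5)]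
      lower_triangular_zero_diag_factor[OF assms(3,5)] by blast
  then show ?thesis
    using zero_diag_mem_poly_commutators[OF assms(1,2,4)] by blast
qed

end
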